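(* For every real constant $\alpha$, there exist a conjunctive query $Q$, a set of functional dependencies on its relations, and a database $D$ satisfying these dependencies, such that $|Q(D)| > \mathrm{rmax}(Q,D)^{\alpha\, C(chase(Q))}$.
   Context: A conjunctive query has the form $Q = R_0(u_0)\leftarrow A_1\wedge\cdots\wedge A_m$, body atoms $A_i=R_{j(i)}(u_i)$ with variable lists $u_i$; $Q(D)$ is the set of $\theta(u_0)$ over all assignments $\theta$ of universe elements to variables with $\theta(u_i)\in R_{j(i)}^D$ for all $i\ge1$; $\mathrm{rmax}(Q,D)$ is the size of the largest relation among those named in the body. A functional dependency $V\to a$ on relation $R$ is satisfied if tuples of $R^D$ agreeing on positions $V$ agree on position $a$; it induces for each atom $R(u)$ the dependency $\{u[p]:p\in V\}\to u[a]$ among query variables. $chase(Q)$ is the query obtained by the standard chase procedure (repeatedly identifying variables forced equal by the FDs among atoms of the same relation and removing duplicate atoms); it returns the same answer as $Q$ on every database satisfying the FDs. Valid coloring: a map $\mathcal{L}$ assigning to each query variable $X$ a finite set $\mathcal{L}(X)$ of colors such that for every induced dependency $X_1,\ldots,X_j\to Y$, $\mathcal{L}(Y)\subseteq\bigcup_i\mathcal{L}(X_i)$. Color number: $C(Q)=\max_{\mathcal{L}} \frac{|\bigcup_{X\in u_0}\mathcal{L}(X)|}{\max_{i\ge1}|\bigcup_{X\in u_i}\mathcal{L}(X)|}$, the maximum over valid colorings with positive denominator. *)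

theory Defs
  imports Complex_Main
begin

text \<open>An atom is a pair (relation name, list of variables). A conjunctive query is a pair
  (head atom, list of body atoms).
  A functional dependency (R, V, a) on relation R says positions V determine position a.
  An arity function fixes the schema.\<close>

type_synonym atom = "nat \<times> nat list"
type_synonym cquery = "atom \<times> atom list"
type_synonym database = "nat \<Rightarrow> nat list set"
type_synonym fd = "nat \<times> nat set \<times> nat"

definition head_vars :: "cquery \<Rightarrow> nat list" where
  "head_vars Q = snd (fst Q)"

definition body :: "cquery \<Rightarrow> atom list" where
  "body Q = snd Q"

definition body_vars :: "cquery \<Rightarrow> nat set" where
  "body_vars Q = (\<Union>(R, u)\<in>set (body Q). set u)"

definition cq_wf :: "(nat \<Rightarrow> nat) \<Rightarrow> cquery \<Rightarrow> bool" where
  "cq_wf ar Q \<longleftrightarrow> body Q \<noteq> [] \<and> (\<forall>(R, u)\<in>set (body Q). length u = ar R)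
     \<and> set (head_vars Q) \<subseteq> body_vars Q"

definition fds_wf :: "(nat \<Rightarrow> nat) \<Rightarrow> fd set \<Rightarrow> bool" where
  "fds_wf ar F \<longleftrightarrow> (\<forall>(R, V, a)\<in>F. V \<subseteq> {..<ar R} \<and> a < ar R)"

definition db_wf :: "(nat \<Rightarrow> nat) \<Rightarrow> database \<Rightarrow> bool" where
  "db_wf ar D \<longleftrightarrow> (\<forall>R. finite (D R) \<and> (\<forall>t\<in>D R. length t = ar R))"

definition satisfies_fds :: "database \<Rightarrow> fd set \<Rightarrow> bool" where
  "satisfies_fds D F \<longleftrightarrow> (\<forall>(R, V, a)\<in>F. \<forall>t\<in>D R. \<forall>t'\<in>D R.
      (\<forall>p\<in>V. t ! p = t' ! p) \<longrightarrow> t ! a = t' ! a)"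

definition answer :: "cquery \<Rightarrow> database \<Rightarrow> nat list set" where
  "answer Q D = {map \<theta> (head_vars Q) | \<theta>. \<forall>(R, u)\<in>set (body Q). map \<theta> u \<in> D R}"

definition rmax :: "cquery \<Rightarrow> database \<Rightarrow> nat" where
  "rmax Q D = Max ((\<lambda>(R, u). card (D R)) ` set (body Q))"

definition induced_deps :: "fd set \<Rightarrow> cquery \<Rightarrow> (nat set \<times> nat) set" where
  "induced_deps F Q = {((\<lambda>p. u ! p) ` V, u ! a) | R u V a.
      (R, u) \<in> set (body Q) \<and> (R, V, a) \<in> F}"

definition valid_coloring :: "fd set \<Rightarrow> cquery \<Rightarrow> (nat \<Rightarrow> nat set) \<Rightarrow> bool" where
  "valid_coloring F Q L \<longleftrightarrow> (\<forall>X. finite (L X)) \<and>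
     (\<forall>(Xs, Y)\<in>induced_deps F Q. L Y \<subseteq> (\<Union>X\<in>Xs. L X))"

definition colors_of :: "(nat \<Rightarrow> nat set) \<Rightarrow> nat list \<Rightarrow> nat set" where
  "colors_of L u = (\<Union>X\<in>set u. L X)"

definition coloring_ratio :: "cquery \<Rightarrow> (nat \<Rightarrow> nat set) \<Rightarrow> real" where
  "coloring_ratio Q L = real (card (colors_of L (head_vars Q)))
      / real (Max ((\<lambda>(R, u). card (colors_of L u)) ` set (body Q)))"

definition color_number :: "fd set \<Rightarrow> cquery \<Rightarrow> real" where
  "color_number F Q = Sup {coloring_ratio Q L | L. valid_coloring F Q L \<and>
      Max ((\<lambda>(R, u). card (colors_of L u)) ` set (body Q)) > 0}"

definition rename_query :: "nat \<Rightarrow> nat \<Rightarrow> cquery \<Rightarrow> cquery" where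
  "rename_query x y Q = (let s = (\<lambda>v. if v = x then y else v) in
     ((fst (fst Q), map s (head_vars Q)),
      remdups (map (\<lambda>(R, u). (R, map s u)) (body Q))))"

definition dedup_query :: "cquery \<Rightarrow> cquery" where
  "dedup_query Q = (fst Q, remdups (body Q))"

definition chase_step :: "fd set \<Rightarrow> cquery \<Rightarrow> cquery \<Rightarrow> bool" where
  "chase_step F Q Q' \<longleftrightarrow> (\<exists>R V a u u'. (R, V, a) \<in> F \<and>
      (R, u) \<in> set (body Q) \<and> (R, u') \<in> set (body Q) \<and>
      (\<forall>p\<in>V. u ! p = u' ! p) \<and> u ! a \<noteq> u' ! a \<and>
      Q' = rename_query (u ! a) (u' ! a) Q)"

definition chase_result :: "fd set \<Rightarrow> cquery \<Rightarrow> cquery \<Rightarrow> bool" where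
  "chase_result F Q Q' \<longleftrightarrow> (chase_step F)\<^sup>*\<^sup>* (dedup_query Q) Q' \<and> (\<nexists>Q''. chase_step F Q' Q'')"

definition chase :: "fd set \<Rightarrow> cquery \<Rightarrow> cquery" where
  "chase F Q = (SOME Q'. chase_result F Q Q')"

end

theory Submission
  imports Defs
begin

(* The witness is the "XOR query" of order k.  Its head lists the 2^k vectors of GF(2)^k
   (encoded as naturals below 2^k) and its body contains a ternary atom R(a, b, a XOR b)
   for every pair a, b; on R each position is functionally determined by the other two.
   The database interprets R as the parity relation {(x, y, x + y mod 2)}, of size 4.
   - Every linear functional v |-> <s, v> over GF(2) is a satisfying assignment, and
     distinct s give distinct answers, so |Q(D)| >= 2^k.
   - The query is already chased (no FD step applies), and every valid coloring L is
     XOR-subadditive: L(a XOR b) is covered by L(a) and L(b).  A double-counting argument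
     shows that then some single variable carries half of all colors, so C(Q) <= 2.
   Hence rmax^(alpha C) <= 4^(2|alpha|), which 2^k exceeds once k is large. *)

unbundle bit_operations_syntax

section \<open>Inner products over GF(2)\<close>

lemma xor_less_pow2: "(a::nat) < 2^k \<Longrightarrow> b < 2^k \<Longrightarrow> a XOR b < 2^k"
  by (metis take_bit_nat_eq_self_iff take_bit_xor)

lemma xor_xor_cancel: "((a::nat) XOR b) XOR b = a"
  by (simp add: xor.assoc)

definition dot2 :: "nat \<Rightarrow> nat \<Rightarrow> nat \<Rightarrow> nat" where
  "dot2 k s v = (\<Sum>i<k. of_bool (bit s i \<and> bit v i)) mod 2"

lemma dot2_le_1: "dot2 k s v \<le> 1"
  unfolding dot2_def by simp

lemma dot2_xor: "dot2 k s (a XOR b) = (dot2 k s a + dot2 k s b) mod 2"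
proof -
  have "(\<Sum>i<k. of_bool (bit s i \<and> bit (a XOR b) i)::nat) mod 2
      = (\<Sum>i<k. of_bool (bit s i \<and> bit (a XOR b) i) mod 2) mod 2"
    by (simp add: mod_sum_eq)
  also have "\<dots> = (\<Sum>i<k. (of_bool (bit s i \<and> bit a i) + of_bool (bit s i \<and> bit b i)) mod 2) mod 2"
    by (rule arg_cong[where f = "\<lambda>x. x mod 2"], rule sum.cong) (auto simp: bit_xor_iff)
  also have "\<dots> = ((\<Sum>i<k. of_bool (bit s i \<and> bit a i)) + (\<Sum>i<k. of_bool (bit s i \<and> bit b i))) mod 2"
    by (simp add: mod_sum_eq sum.distrib)
  finally show ?thesis
    unfolding dot2_def by (simp add: mod_add_eq)
qed

lemma dot2_pow2: "j < k \<Longrightarrow> dot2 k s (2^j) = of_bool (bit s j)"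
proof -
  assume j: "j < k"
  have "(\<Sum>i<k. of_bool (bit s i \<and> bit ((2::nat)^j) i)::nat) = (\<Sum>i\<in>{j}. of_bool (bit s i))"
    by (rule sum.mono_neutral_cong_right) (auto simp: j bit_exp_iff)
  then show ?thesis
    unfolding dot2_def by simp
qed

lemma dot2_inj:
  assumes "s < 2^k" "t < 2^k" and same: "\<forall>v<2^k. dot2 k s v = dot2 k t v"
  shows "s = t"
proof (rule bit_eqI)
  fix n
  show "bit s n = bit t n"
  proof (cases "n < k")
    case True
    then have "dot2 k s (2^n) = dot2 k t (2^n)"
      using same by simp
    then show ?thesis
      using dot2_pow2[OF True, of s] dot2_pow2[OF True, of t] by (simp add: of_bool_eq_iff)
  next
    case False
    then show ?thesis
      using assms(1,2) by (metis bit_take_bit_iff take_bit_nat_eq_self_iff)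
  qed
qed

text \<open>A safe query over a database of finite relations has finitely many answers: every
  head variable takes a value occurring in some tuple of the database.\<close>
lemma finite_answer:
  assumes "db_wf ar D" and safe: "set (head_vars Q) \<subseteq> body_vars Q"
  shows "finite (answer Q D)"
proof -
  let ?vals = "\<Union>(R, u)\<in>set (body Q). \<Union>t\<in>D R. set t"
  have fin: "finite ?vals"
    using assms(1) by (auto simp: db_wf_def)
  have "answer Q D \<subseteq> {xs. set xs \<subseteq> ?vals \<and> length xs = length (head_vars Q)}"
  proof
    fix xs assume "xs \<in> answer Q D"
    then obtain \<theta> where xs: "xs = map \<theta> (head_vars Q)"
      and sat: "\<forall>(R, u)\<in>set (body Q). map \<theta> u \<in> D R"
      by (auto simp: answer_def)
    have "\<theta> x \<in> ?vals" if "x \<in> set (head_vars Q)" for x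
    proof -
      have "x \<in> body_vars Q"
        using that safe by blast
      then obtain R u where atom: "(R, u) \<in> set (body Q)" "x \<in> set u"
        unfolding body_vars_def by blast
      then have "map \<theta> u \<in> D R" "\<theta> x \<in> set (map \<theta> u)"
        using sat by auto
      then show ?thesis
        using atom(1) by blast
    qed
    then show "xs \<in> {xs. set xs \<subseteq> ?vals \<and> length xs = length (head_vars Q)}"
      using xs by auto
  qed
  then show ?thesis
    using finite_lists_length_eq[OF fin] by (rule finite_subset)
qed

lemma rmax_single_relation:
  assumes "body Q \<noteq> []" and "\<forall>(R, u)\<in>set (body Q). R = R\<^sub>0"
  shows "rmax Q D = card (D R\<^sub>0)"
proof -
  have "(\<lambda>(R, u). card (D R)) ` set (body Q) = {card (D R\<^sub>0)}"
    using assms by (force simp: neq_Nil_conv)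
  then show ?thesis
    by (simp add: rmax_def)
qed

lemma body_dedup_query [simp]: "set (body (dedup_query Q)) = set (body Q)"
  and head_vars_dedup_query [simp]: "head_vars (dedup_query Q) = head_vars Q"
  unfolding body_def dedup_query_def head_vars_def by auto

lemma chase_of_terminal:
  assumes "\<And>Q'. \<not> chase_step F (dedup_query Q) Q'"
  shows "chase F Q = dedup_query Q"
proof -
  have "chase_result F Q Q' \<longleftrightarrow> Q' = dedup_query Q" for Q'
    using assms by (auto simp: chase_result_def elim: converse_rtranclpE)
  then show ?thesis
    by (simp add: chase_def)
qed

definition max_atom_colors :: "cquery \<Rightarrow> (nat \<Rightarrow> nat set) \<Rightarrow> nat" where
  "max_atom_colors Q L = Max ((\<lambda>(R, u). card (colors_of L u)) ` set (body Q))"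

lemma color_number_eq:
  "color_number F Q = Sup {coloring_ratio Q L | L. valid_coloring F Q L \<and> max_atom_colors Q L > 0}"
  by (simp add: color_number_def max_atom_colors_def)

lemma coloring_ratio_eq:
  "coloring_ratio Q L = real (card (colors_of L (head_vars Q))) / real (max_atom_colors Q L)"
  by (simp add: coloring_ratio_def max_atom_colors_def)

lemma atom_colors_le_max:
  "(R, u) \<in> set (body Q) \<Longrightarrow> card (colors_of L u) \<le> max_atom_colors Q L"
  unfolding max_atom_colors_def by (rule Max_ge) force+

lemma color_number_dedup: "color_number F (dedup_query Q) = color_number F Q"
  by (simp add: color_number_eq coloring_ratio_eq max_atom_colors_def valid_coloring_def
      induced_deps_def)

lemma color_number_bounded:
  assumes witness: "valid_coloring F Q L\<^sub>0" "max_atom_colors Q L\<^sub>0 > 0"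
    and bound: "\<And>L. valid_coloring F Q L \<Longrightarrow> max_atom_colors Q L > 0 \<Longrightarrow> coloring_ratio Q L \<le> c"
  shows "0 \<le> color_number F Q \<and> color_number F Q \<le> c"
proof -
  let ?S = "{coloring_ratio Q L | L. valid_coloring F Q L \<and> max_atom_colors Q L > 0}"
  have member: "coloring_ratio Q L\<^sub>0 \<in> ?S"
    using witness by blast
  have upper: "\<And>x. x \<in> ?S \<Longrightarrow> x \<le> c"
    using bound by blast
  have "0 \<le> coloring_ratio Q L\<^sub>0"
    by (simp add: coloring_ratio_eq)
  also have "coloring_ratio Q L\<^sub>0 \<le> Sup ?S"
    using member upper by (intro cSup_upper) (auto simp: bdd_above_def)
  finally have "0 \<le> Sup ?S" .
  moreover have "Sup ?S \<le> c"
    using member upper by (intro cSup_least) auto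
  ultimately show ?thesis
    by (simp add: color_number_eq)
qed

section \<open>Colorings that are subadditive under XOR\<close>

definition xor_subadditive :: "nat \<Rightarrow> (nat \<Rightarrow> nat set) \<Rightarrow> bool" where
  "xor_subadditive k L \<longleftrightarrow> (\<forall>v<2^k. \<forall>w<2^k. L (v XOR w) \<subseteq> L v \<union> L w)"

text \<open>A color used by some vector is used by at least half of all vectors: translating
  by that vector maps the vectors lacking the color injectively to vectors having it.\<close>
lemma color_on_half:
  assumes L: "xor_subadditive k L" and g: "g < 2^k" "c \<in> L g"
  shows "2^k \<le> 2 * card {v. v < 2^k \<and> c \<in> L v}"
proof -
  let ?T = "{v. v < 2^k \<and> c \<notin> L v}" and ?P = "{v. v < 2^k \<and> c \<in> L v}"
  have maps: "(\<lambda>v. v XOR g) ` ?T \<subseteq> ?P"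
  proof
    fix x assume "x \<in> (\<lambda>v. v XOR g) ` ?T"
    then obtain v where v: "v < 2^k" "c \<notin> L v" "x = v XOR g"
      by auto
    have x: "x < 2^k"
      using v g xor_less_pow2 by blast
    have "v XOR x = g"
      using v(3) by (simp flip: xor.assoc)
    then have "L g \<subseteq> L v \<union> L x"
      using L v(1) x by (auto simp: xor_subadditive_def)
    then show "x \<in> ?P"
      using x g v by blast
  qed
  have "inj_on (\<lambda>v. v XOR g) ?T"
    by (rule inj_onI) (metis xor_xor_cancel)
  then have "card ?T \<le> card ?P"
    using card_mono[OF _ maps] card_image by fastforce
  moreover have "card ?T + card ?P = 2^k"
  proof -
    have "?T \<union> ?P = {..<2^k}" "?T \<inter> ?P = {}"
      by auto
    then show ?thesis
      using card_Un_disjoint[of ?T ?P] by simp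
  qed
  ultimately show ?thesis
    by linarith
qed

lemma sum_card_incidences:
  assumes "finite I" "finite A" "\<And>v. v \<in> I \<Longrightarrow> L v \<subseteq> A"
  shows "(\<Sum>v\<in>I. card (L v)) = (\<Sum>c\<in>A. card {v\<in>I. c \<in> L v})"
proof -
  have "(\<Sum>v\<in>I. card (L v)) = (\<Sum>v\<in>I. \<Sum>c\<in>A. of_bool (c \<in> L v)::nat)"
  proof (rule sum.cong)
    fix v assume "v \<in> I"
    then have "L v = A \<inter> {c. c \<in> L v}"
      using assms(3) by auto
    then show "card (L v) = (\<Sum>c\<in>A. of_bool (c \<in> L v))"
      using assms(2) by simp
  qed simp
  also have "\<dots> = (\<Sum>c\<in>A. \<Sum>v\<in>I. of_bool (c \<in> L v)::nat)"
    by (rule sum.swap)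
  also have "\<dots> = (\<Sum>c\<in>A. card {v\<in>I. c \<in> L v})"
    using assms(1) by (simp add: Int_def)
  finally show ?thesis .
qed

text \<open>Some vector carries at least half of all colors: since every color lies on half of
  the vectors, the average number of colors per vector is at least half of the total.\<close>
lemma heavy_vector_exists:
  assumes L: "xor_subadditive k L" and fin: "\<And>v. finite (L v)"
  shows "\<exists>a<2^k. card (\<Union>v<2^k. L v) \<le> 2 * card (L a)"
proof (rule ccontr)
  let ?A = "\<Union>v<2^k. L v"
  assume "\<not> ?thesis"
  then have light: "\<And>a. a < 2^k \<Longrightarrow> 2 * card (L a) < card ?A"
    by force
  have "(\<Sum>c\<in>?A. (2::nat)^k) \<le> (\<Sum>c\<in>?A. 2 * card {v\<in>{..<2^k}. c \<in> L v})"
    by (rule sum_mono) (use color_on_half[OF L] in auto)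
  also have "\<dots> = 2 * (\<Sum>c\<in>?A. card {v\<in>{..<2^k}. c \<in> L v})"
    by (simp add: sum_distrib_left)
  also have "\<dots> = 2 * (\<Sum>v<2^k. card (L v))"
    by (subst sum_card_incidences[of "{..<2^k}" ?A L]) (auto simp: fin)
  also have "\<dots> = (\<Sum>v<(2::nat)^k. 2 * card (L v))"
    by (simp add: sum_distrib_left)
  also have "\<dots> < (\<Sum>v<(2::nat)^k. card ?A)"
    by (rule sum_strict_mono) (auto simp: light lessThan_empty_iff)
  finally show False
    by (simp add: mult.commute)
qed

section \<open>The XOR query and the parity database\<close>

definition xor_query :: "nat \<Rightarrow> cquery" where
  "xor_query k = ((0, [0..<2^k]), [(0, [a, b, a XOR b]). a \<leftarrow> [0..<2^k], b \<leftarrow> [0..<2^k]])"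

definition xor_fds :: "fd set" where
  "xor_fds = {(0, {0, 1}, 2), (0, {0, 2}, 1), (0, {1, 2}, 0)}"

definition parity_db :: database where
  "parity_db = (\<lambda>R. if R = 0 then {[0,0,0], [0,1,1], [1,0,1], [1,1,0]} else {})"

lemma body_xor_query: "set (body (xor_query k)) = {(0, [a, b, a XOR b]) | a b. a < 2^k \<and> b < 2^k}"
  unfolding body_def xor_query_def by auto

lemma head_vars_xor_query: "head_vars (xor_query k) = [0..<2^k]"
  unfolding head_vars_def xor_query_def by simp

lemma diagonal_atom: "v < 2^k \<Longrightarrow> (0, [v, v, v XOR v]) \<in> set (body (xor_query k))"
  unfolding body_xor_query by blast

lemma xor_query_wf: "cq_wf (\<lambda>_. 3) (xor_query k)"
proof -
  have "set (head_vars (xor_query k)) \<subseteq> body_vars (xor_query k)"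
    using diagonal_atom by (force simp: head_vars_xor_query body_vars_def)
  moreover have "body (xor_query k) \<noteq> []"
    using diagonal_atom[of 0 k] by auto
  ultimately show ?thesis
    unfolding cq_wf_def by (auto simp: body_xor_query)
qed

lemma xor_fds_wf: "fds_wf (\<lambda>_. 3) xor_fds"
  unfolding fds_wf_def xor_fds_def by auto

lemma parity_db_wf: "db_wf (\<lambda>_. 3) parity_db"
  unfolding db_wf_def parity_db_def by auto

lemma parity_db_satisfies: "satisfies_fds parity_db xor_fds"
  unfolding satisfies_fds_def xor_fds_def parity_db_def by auto

lemma rmax_xor_query: "rmax (xor_query k) parity_db = 4"
proof -
  have "rmax (xor_query k) parity_db = card (parity_db 0)"
    using xor_query_wf[of k] by (intro rmax_single_relation) (auto simp: cq_wf_def body_xor_query)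
  then show ?thesis
    by (simp add: parity_db_def)
qed

text \<open>The XOR query is already chased: atoms agreeing on two positions agree on the third.\<close>
lemma chase_xor_query: "chase xor_fds (xor_query k) = dedup_query (xor_query k)"
proof (rule chase_of_terminal)
  fix Q'
  show "\<not> chase_step xor_fds (dedup_query (xor_query k)) Q'"
  proof
    assume "chase_step xor_fds (dedup_query (xor_query k)) Q'"
    then obtain R V a u u' where fd: "(R, V, a) \<in> xor_fds"
      and atoms: "(R, u) \<in> set (body (xor_query k))" "(R, u') \<in> set (body (xor_query k))"
      and agree: "\<forall>p\<in>V. u ! p = u' ! p" and differ: "u ! a \<noteq> u' ! a"
      unfolding chase_step_def by auto
    from atoms obtain x y x' y' where "u = [x, y, x XOR y]" "u' = [x', y', x' XOR y']"
      unfolding body_xor_query by auto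
    with fd agree differ show False
      unfolding xor_fds_def by (auto, metis xor_xor_cancel xor.commute)+
  qed
qed

lemma valid_coloring_xor_subadditive:
  assumes "valid_coloring xor_fds (xor_query k) L"
  shows "xor_subadditive k L"
  unfolding xor_subadditive_def
proof (intro allI impI)
  fix v w :: nat assume "v < 2^k" "w < 2^k"
  then have "((\<lambda>p. [v, w, v XOR w] ! p) ` {0, 1}, [v, w, v XOR w] ! 2) \<in> induced_deps xor_fds (xor_query k)"
    unfolding induced_deps_def body_xor_query xor_fds_def by blast
  moreover have "(\<lambda>p. [v, w, v XOR w] ! p) ` {0, 1} = {v, w}"
    by auto
  ultimately show "L (v XOR w) \<subseteq> L v \<union> L w"
    using assms unfolding valid_coloring_def by fastforce
qed

text \<open>The head colors are at most twice those of the diagonal atom of a heavy vector.\<close>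
lemma coloring_ratio_xor_query:
  assumes V: "valid_coloring xor_fds (xor_query k) L" and pos: "max_atom_colors (xor_query k) L > 0"
  shows "coloring_ratio (xor_query k) L \<le> 2"
proof -
  have fin: "\<And>x. finite (L x)"
    using V unfolding valid_coloring_def by auto
  obtain a where a: "a < 2^k" "card (\<Union>v<2^k. L v) \<le> 2 * card (L a)"
    using heavy_vector_exists[OF valid_coloring_xor_subadditive[OF V] fin] by blast
  have "card (L a) \<le> card (colors_of L [a, a, a XOR a])"
    by (rule card_mono) (auto simp: colors_of_def fin)
  also have "\<dots> \<le> max_atom_colors (xor_query k) L"
    using diagonal_atom[OF a(1)] by (rule atom_colors_le_max)
  finally have "card (colors_of L (head_vars (xor_query k))) \<le> 2 * max_atom_colors (xor_query k) L"
    using a(2) by (simp add: head_vars_xor_query colors_of_def atLeast0LessThan)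
  then show ?thesis
    using pos by (simp add: coloring_ratio_eq divide_le_eq)
qed

lemma color_number_xor_query:
  "0 \<le> color_number xor_fds (xor_query k) \<and> color_number xor_fds (xor_query k) \<le> 2"
proof (rule color_number_bounded)
  show "valid_coloring xor_fds (xor_query k) (\<lambda>_. {0})"
    unfolding valid_coloring_def induced_deps_def xor_fds_def by auto
  have "card (colors_of (\<lambda>_. {0}) [0, 0, 0 XOR 0]) \<le> max_atom_colors (xor_query k) (\<lambda>_. {0})"
    using diagonal_atom[of 0 k] by (intro atom_colors_le_max) simp
  then show "max_atom_colors (xor_query k) (\<lambda>_. {0}) > 0"
    by (simp add: colors_of_def)
qed (rule coloring_ratio_xor_query)

lemma linear_functional_answer:
  "map (dot2 k s) [0..<2^k] \<in> answer (xor_query k) parity_db"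
proof -
  have "[dot2 k s a, dot2 k s b, dot2 k s (a XOR b)] \<in> parity_db 0" for a b
    using dot2_le_1[of k s a] dot2_le_1[of k s b]
    unfolding dot2_xor parity_db_def by (cases "dot2 k s a"; cases "dot2 k s b") auto
  then have "\<forall>(R, u)\<in>set (body (xor_query k)). map (dot2 k s) u \<in> parity_db R"
    by (auto simp: body_xor_query)
  then show ?thesis
    unfolding answer_def head_vars_xor_query by blast
qed

lemma card_answer_xor_query: "2^k \<le> card (answer (xor_query k) parity_db)"
proof -
  let ?f = "\<lambda>s. map (dot2 k s) [0..<2^k]"
  have "inj_on ?f {..<2^k}"
    by (rule inj_onI) (auto intro: dot2_inj simp: map_eq_conv)
  then have "card (?f ` {..<2^k}) = 2^k"
    by (simp add: card_image)
  moreover have "finite (answer (xor_query k) parity_db)"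
    using xor_query_wf[of k] by (intro finite_answer[OF parity_db_wf]) (simp add: cq_wf_def)
  ultimately show ?thesis
    using linear_functional_answer by (metis card_mono image_subsetI)
qed

theorem theorem4p2:
  fixes \<alpha> :: real
  shows "\<exists>ar Q F D. cq_wf ar Q \<and> fds_wf ar F \<and> db_wf ar D \<and> satisfies_fds D F \<and>
    real (card (answer Q D)) > real (rmax Q D) powr (\<alpha> * color_number F (chase F Q))"
proof -
  define m where "m = nat \<lceil>2 * \<bar>\<alpha>\<bar>\<rceil> + 1"
  let ?Q = "xor_query (2 * m)"
  let ?C = "color_number xor_fds (chase xor_fds ?Q)"
  have C: "0 \<le> ?C" "?C \<le> 2"
    using color_number_xor_query[of "2 * m"] by (auto simp: chase_xor_query color_number_dedup)
  have "\<alpha> * ?C \<le> \<bar>\<alpha>\<bar> * 2"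
    using C by (metis abs_ge_self abs_ge_zero mult_left_mono mult_right_mono order.trans)
  then have "real (rmax ?Q parity_db) powr (\<alpha> * ?C) \<le> 4 powr (2 * \<bar>\<alpha>\<bar>)"
    by (simp add: rmax_xor_query)
  also have "\<dots> < 4 powr real m"
    unfolding m_def by (intro powr_less_mono) linarith+
  also have "\<dots> = real (2 ^ (2 * m))"
    by (simp add: powr_realpow power_mult)
  also have "\<dots> \<le> real (card (answer ?Q parity_db))"
    using card_answer_xor_query by (simp only: of_nat_le_iff)
  finally show ?thesis
    using xor_query_wf xor_fds_wf parity_db_wf parity_db_satisfies by blast
qed

end
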